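(* For every non-empty $\mathscr P\subseteq\{1,\dots,N-1\}$, $$Z_{[-1,N+1]\setminus\mathscr P}(\mathbf 0)\le 2\pi N\,Z_{[-1,N+1]\setminus c(\mathscr P)}(\mathbf 0).$$
   Context: $\mathcal H_{[-1,N+1]}(\phi)=\sum_{k=0}^{N}\frac12(\phi_{k+1}+\phi_{k-1}-2\phi_k)^2$. For $\mathscr P\subseteq\{1,\dots,N-1\}$, $Z_{[-1,N+1]\setminus\mathscr P}(\mathbf 0)=\int e^{-\mathcal H_{[-1,N+1]}(\phi)}\prod_{k\in\{1,\dots,N-1\}\setminus\mathscr P}d\phi_k$, where $\phi_k=0$ for $k\in\mathscr P\cup\{-1,0,N,N+1\}$. For non-empty $\mathscr P$ with $p_*=\min\mathscr P$, $p^*=\max\mathscr P$, the correction is $c(\mathscr P)=\mathscr P\cup\{p_*+1,p^*-1\}$ (sites outside $\{1,\dots,N-1\}$ being already pinned to zero). *)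

theory Defs
  imports "HOL-Analysis.Analysis"
begin

definition pinned_field :: "int set \<Rightarrow> (int \<Rightarrow> real) \<Rightarrow> int \<Rightarrow> real" where
  "pinned_field F x k = (if k \<in> F then x k else 0)"

definition hamiltonian :: "nat \<Rightarrow> (int \<Rightarrow> real) \<Rightarrow> real" where
  "hamiltonian N \<phi> = (\<Sum>k\<in>{0..int N}. (1/2) * (\<phi> (k+1) + \<phi> (k-1) - 2 * \<phi> k)^2)"

definition free_sites :: "nat \<Rightarrow> int set \<Rightarrow> int set" where
  "free_sites N P = {1..int N - 1} - P"

definition partition_fn :: "nat \<Rightarrow> int set \<Rightarrow> ennreal" where
  "partition_fn N P =
     (\<integral>\<^sup>+ x. ennreal (exp (- hamiltonian N (pinned_field (free_sites N P) x)))
        \<partial>(PiM (free_sites N P) (\<lambda>_. lborel)))"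

definition correction :: "int set \<Rightarrow> int set" where
  "correction P = P \<union> {Min P + 1, Max P - 1}"

end

theory Submission
  imports Defs "HOL-Probability.Distributions"
begin

(* Split the free sites of P into those of c(P) and the at most two sites Y \<subseteq> {p_* + 1, p^* - 1}.
   For fixed values y on Y, translate the remaining integration variable by the energy-orthogonal
   correction T of y: the Hamiltonian then splits as H(x) + H(T), so the inner integral is
   exp(-H(T)) Z(c(P)). As T vanishes at p_*, p^* and on the boundary, T(p_* + 1) and T(p^* - 1) are
   sums of Laplacians of T over disjoint ranges of length at most N, and Cauchy-Schwarz gives
   H(T) \<ge> |y|\<^sup>2 / (2N). The remaining Gaussian integral over Y is (2 \<pi> N)^(|Y|/2) \<le> 2 \<pi> N. *)

definition laplacian :: "(int \<Rightarrow> real) \<Rightarrow> int \<Rightarrow> real" where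
  "laplacian \<phi> k = \<phi> (k + 1) + \<phi> (k - 1) - 2 * \<phi> k"

definition energy_form :: "nat \<Rightarrow> (int \<Rightarrow> real) \<Rightarrow> (int \<Rightarrow> real) \<Rightarrow> real" where
  "energy_form N \<phi> \<psi> = (\<Sum>k\<in>{0..int N}. laplacian \<phi> k * laplacian \<psi> k)"

lemma hamiltonian_eq_energy_form: "hamiltonian N \<phi> = energy_form N \<phi> \<phi> / 2"
  unfolding hamiltonian_def energy_form_def laplacian_def
  by (simp add: sum_divide_distrib power2_eq_square)

lemma laplacian_add: "laplacian (\<lambda>k. \<phi> k + \<psi> k) k = laplacian \<phi> k + laplacian \<psi> k"
  unfolding laplacian_def by simp

lemma laplacian_scale: "laplacian (\<lambda>k. c * \<phi> k) k = c * laplacian \<phi> k"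
  unfolding laplacian_def by (simp add: algebra_simps)

lemma energy_form_commute: "energy_form N \<phi> \<psi> = energy_form N \<psi> \<phi>"
  unfolding energy_form_def by (simp add: mult.commute)

lemma energy_form_add_left:
  "energy_form N (\<lambda>k. \<phi> k + \<psi> k) \<rho> = energy_form N \<phi> \<rho> + energy_form N \<psi> \<rho>"
  unfolding energy_form_def laplacian_add by (simp add: algebra_simps sum.distrib)

lemma energy_form_add_right:
  "energy_form N \<rho> (\<lambda>k. \<phi> k + \<psi> k) = energy_form N \<rho> \<phi> + energy_form N \<rho> \<psi>"
  by (simp add: energy_form_commute[of N \<rho>] energy_form_add_left)

lemma energy_form_scale_left: "energy_form N (\<lambda>k. c * \<phi> k) \<psi> = c * energy_form N \<phi> \<psi>"
  unfolding energy_form_def laplacian_scale by (simp add: algebra_simps sum_distrib_left)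

lemma energy_form_scale_right: "energy_form N \<phi> (\<lambda>k. c * \<psi> k) = c * energy_form N \<phi> \<psi>"
  by (simp add: energy_form_commute[of N \<phi>] energy_form_scale_left)

lemma energy_form_diag: "energy_form N \<phi> \<phi> = (\<Sum>k\<in>{0..int N}. (laplacian \<phi> k)\<^sup>2)"
  unfolding energy_form_def by (simp add: power2_eq_square)

lemma hamiltonian_add_orthogonal:
  assumes "energy_form N \<phi> \<psi> = 0"
  shows "hamiltonian N (\<lambda>k. \<phi> k + \<psi> k) = hamiltonian N \<phi> + hamiltonian N \<psi>"
  using assms energy_form_commute[of N \<psi> \<phi>]
  by (simp add: hamiltonian_eq_energy_form energy_form_add_left energy_form_add_right)

lemma increment_eq_sum_laplacian_left:
  assumes "\<phi> (-1) = 0" "\<phi> 0 = 0" "0 \<le> j"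
  shows "\<phi> j - \<phi> (j - 1) = (\<Sum>k\<in>{0..j - 1}. laplacian \<phi> k)"
  using assms(3)
proof (induction j rule: int_ge_induct)
  case (step i)
  have "{0..i} = insert i {0..i - 1}" using step.hyps by auto
  with step.IH show ?case by (simp add: laplacian_def)
qed (use assms in simp)

lemma increment_eq_sum_laplacian_right:
  assumes "\<phi> (int N) = 0" "\<phi> (int N + 1) = 0" "j \<le> int N + 1"
  shows "\<phi> j - \<phi> (j - 1) = - (\<Sum>k\<in>{j..int N}. laplacian \<phi> k)"
  using assms(3)
proof (induction j rule: int_le_induct)
  case (step i)
  have "{i - 1..int N} = insert (i - 1) {i..int N}" using step.hyps by auto
  with step.IH show ?case by (simp add: laplacian_def)
qed (use assms in simp)

lemma increment_sq_le_left:
  assumes "\<phi> (-1) = 0" "\<phi> 0 = 0" "0 \<le> j" "j \<le> int N"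
  shows "(\<phi> j - \<phi> (j - 1))\<^sup>2 \<le> real N * (\<Sum>k\<in>{0..j - 1}. (laplacian \<phi> k)\<^sup>2)"
proof -
  have "(\<phi> j - \<phi> (j - 1))\<^sup>2 \<le> (\<Sum>k\<in>{0..j - 1}. (laplacian \<phi> k)\<^sup>2) * card {0..j - 1}"
    unfolding increment_eq_sum_laplacian_left[OF assms(1-3)] by (rule sum_squared_le_sum_of_squares)
  also have "\<dots> \<le> real N * (\<Sum>k\<in>{0..j - 1}. (laplacian \<phi> k)\<^sup>2)"
    using assms(4) by (simp add: mult.commute mult_right_mono sum_nonneg)
  finally show ?thesis .
qed

lemma increment_sq_le_right:
  assumes "\<phi> (int N) = 0" "\<phi> (int N + 1) = 0" "1 \<le> j" "j \<le> int N + 1"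
  shows "(\<phi> j - \<phi> (j - 1))\<^sup>2 \<le> real N * (\<Sum>k\<in>{j..int N}. (laplacian \<phi> k)\<^sup>2)"
proof -
  have "(\<phi> j - \<phi> (j - 1))\<^sup>2 \<le> (\<Sum>k\<in>{j..int N}. (laplacian \<phi> k)\<^sup>2) * card {j..int N}"
    unfolding increment_eq_sum_laplacian_right[OF assms(1,2,4)] power2_minus
    by (rule sum_squared_le_sum_of_squares)
  also have "\<dots> \<le> real N * (\<Sum>k\<in>{j..int N}. (laplacian \<phi> k)\<^sup>2)"
    using assms(3) by (simp add: mult.commute mult_right_mono sum_nonneg)
  finally show ?thesis .
qed

lemma energy_split_le:
  assumes "0 \<le> a" "a \<le> b" "b \<le> int N + 1"
  shows "(\<Sum>k\<in>{0..a - 1}. (laplacian \<phi> k)\<^sup>2) + (\<Sum>k\<in>{b..int N}. (laplacian \<phi> k)\<^sup>2)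
           \<le> energy_form N \<phi> \<phi>"
proof -
  have "(\<Sum>k\<in>{0..a - 1}. (laplacian \<phi> k)\<^sup>2) + (\<Sum>k\<in>{b..int N}. (laplacian \<phi> k)\<^sup>2)
      = (\<Sum>k\<in>{0..a - 1} \<union> {b..int N}. (laplacian \<phi> k)\<^sup>2)"
    using assms(2) by (intro sum.union_disjoint[symmetric]) auto
  also have "\<dots> \<le> (\<Sum>k\<in>{0..int N}. (laplacian \<phi> k)\<^sup>2)"
    using assms by (intro sum_mono2) auto
  finally show ?thesis by (simp add: energy_form_diag)
qed

lemma neighbours_of_zeros_sq_le_energy:
  assumes "\<phi> (-1) = 0" "\<phi> 0 = 0" "\<phi> (int N) = 0" "\<phi> (int N + 1) = 0"
    and "\<phi> p = 0" "\<phi> q = 0" "1 \<le> p" "p \<le> q" "q \<le> int N - 1"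
  shows "(\<phi> (p + 1))\<^sup>2 + (\<phi> (q - 1))\<^sup>2 \<le> real N * energy_form N \<phi> \<phi>"
proof -
  obtain a b where ab: "1 \<le> a" "a \<le> b" "b \<le> int N"
    and sq: "(\<phi> (p + 1))\<^sup>2 + (\<phi> (q - 1))\<^sup>2 = (\<phi> a - \<phi> (a - 1))\<^sup>2 + (\<phi> b - \<phi> (b - 1))\<^sup>2"
  proof (cases "p < q")
    case True
    then show ?thesis using assms by (intro that[of "p + 1" q]) (auto simp: power2_commute)
  next
    case False
    then show ?thesis using assms by (intro that[of p "p + 1"]) (auto simp: power2_commute)
  qed
  have "(\<phi> a - \<phi> (a - 1))\<^sup>2 + (\<phi> b - \<phi> (b - 1))\<^sup>2
      \<le> real N * ((\<Sum>k\<in>{0..a - 1}. (laplacian \<phi> k)\<^sup>2) + (\<Sum>k\<in>{b..int N}. (laplacian \<phi> k)\<^sup>2))"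
    using increment_sq_le_left[OF assms(1,2)] increment_sq_le_right[OF assms(3,4)] ab
    by (simp add: distrib_left add_mono)
  also have "\<dots> \<le> real N * energy_form N \<phi> \<phi>"
    using ab by (intro mult_left_mono energy_split_le) auto
  finally show ?thesis using sq by simp
qed

lemma sum_sq_le_hamiltonian:
  assumes "\<phi> (-1) = 0" "\<phi> 0 = 0" "\<phi> (int N) = 0" "\<phi> (int N + 1) = 0"
    and "\<phi> p = 0" "\<phi> q = 0" "1 \<le> p" "p \<le> q" "q \<le> int N - 1"
    and "Y \<subseteq> {p + 1, q - 1}"
  shows "(\<Sum>k\<in>Y. (\<phi> k)\<^sup>2) / (2 * real N) \<le> hamiltonian N \<phi>"
proof -
  have "(\<Sum>k\<in>Y. (\<phi> k)\<^sup>2) \<le> (\<Sum>k\<in>{p + 1, q - 1}. (\<phi> k)\<^sup>2)"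
    using assms(10) by (intro sum_mono2) auto
  also have "\<dots> \<le> (\<phi> (p + 1))\<^sup>2 + (\<phi> (q - 1))\<^sup>2"
    by (cases "p + 1 = q - 1") (simp_all only: insert_absorb2 sum.insert_if, auto)
  also have "\<dots> \<le> real N * energy_form N \<phi> \<phi>"
    using neighbours_of_zeros_sq_le_energy assms(1-9) .
  finally show ?thesis
    using assms(7-9) by (simp add: hamiltonian_eq_energy_form field_simps)
qed

lemma energy_form_pos:
  assumes "\<And>k. k \<notin> {1..int N - 1} \<Longrightarrow> w k = 0" and "w i \<noteq> 0"
  shows "energy_form N w w > 0"
proof (rule ccontr)
  assume "\<not> energy_form N w w > 0"
  then have "(\<Sum>k\<in>{0..int N}. (laplacian w k)\<^sup>2) = 0"
    by (simp add: energy_form_diag antisym sum_nonneg)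
  then have harmonic: "laplacian w k = 0" if "k \<in> {0..int N}" for k
    using that by (simp add: sum_nonneg_eq_0_iff)
  have flat: "w j = w (j - 1)" if "0 \<le> j" "j \<le> int N + 1" for j
    using increment_eq_sum_laplacian_left[of w j] assms(1) that harmonic by simp
  have "j \<le> int N + 1 \<longrightarrow> w j = 0" if "-1 \<le> j" for j
    using that by (induction j rule: int_ge_induct) (use assms(1) flat in auto)
  then have "w i = 0" using assms(1)[of i] by (cases "i \<in> {1..int N - 1}") auto
  with assms(2) show False ..
qed

(* \<phi> + t is the energy minimiser among the fields agreeing with \<phi> off S; t is built one site
   at a time, Gram-Schmidt style. *)
lemma energy_orthogonal_correction:
  assumes "finite S" "S \<subseteq> {1..int N - 1}"
  shows "\<exists>t. (\<forall>k. k \<notin> S \<longrightarrow> t k = 0) \<and>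
    (\<forall>u. (\<forall>k. k \<notin> S \<longrightarrow> u k = 0) \<longrightarrow> energy_form N u (\<lambda>k. \<phi> k + t k) = 0)"
  using assms
proof (induction S arbitrary: \<phi> rule: finite_induct)
  case empty
  show ?case by (intro exI[of _ "\<lambda>_. 0"]) (simp add: energy_form_def laplacian_def)
next
  case (insert i S)
  have S: "S \<subseteq> {1..int N - 1}" using insert.prems by auto
  obtain t0 where t0: "\<forall>k. k \<notin> S \<longrightarrow> t0 k = 0"
    "\<forall>u. (\<forall>k. k \<notin> S \<longrightarrow> u k = 0) \<longrightarrow> energy_form N u (\<lambda>k. \<phi> k + t0 k) = 0"
    using insert.IH[OF S] by blast
  define \<delta> where "\<delta> k = (if k = i then 1 else 0 :: real)" for k
  obtain t1 where t1: "\<forall>k. k \<notin> S \<longrightarrow> t1 k = 0"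
    "\<forall>u. (\<forall>k. k \<notin> S \<longrightarrow> u k = 0) \<longrightarrow> energy_form N u (\<lambda>k. \<delta> k + t1 k) = 0"
    using insert.IH[OF S] by blast
  define w where "w k = \<delta> k + t1 k" for k
  have w_pos: "energy_form N w w > 0"
    using t1(1) insert.hyps(2) insert.prems by (intro energy_form_pos[of N w i]) (auto simp: w_def \<delta>_def)
  have \<delta>_w: "energy_form N \<delta> w = energy_form N w w"
    using t1 by (simp add: w_def[abs_def] energy_form_add_left)
  define s where "s = - energy_form N \<delta> (\<lambda>k. \<phi> k + t0 k) / energy_form N w w"
  show ?case
  proof (intro exI[of _ "\<lambda>k. t0 k + s * w k"] conjI allI impI)
    fix k assume "k \<notin> insert i S"
    then show "t0 k + s * w k = 0" using t0(1) t1(1) by (simp add: w_def \<delta>_def)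
  next
    fix u :: "int \<Rightarrow> real" assume u: "\<forall>k. k \<notin> insert i S \<longrightarrow> u k = 0"
    define u' where "u' = u(i := 0)"
    have u'_S: "\<forall>k. k \<notin> S \<longrightarrow> u' k = 0" using u by (simp add: u'_def)
    have u_split: "u = (\<lambda>k. u' k + u i * \<delta> k)" by (auto simp: u'_def \<delta>_def)
    have "energy_form N u (\<lambda>k. \<phi> k + (t0 k + s * w k))
        = energy_form N u' (\<lambda>k. \<phi> k + t0 k) + s * energy_form N u' w
          + u i * (energy_form N \<delta> (\<lambda>k. \<phi> k + t0 k) + s * energy_form N \<delta> w)"
      by (subst u_split, simp only: add.assoc[symmetric] energy_form_add_left energy_form_add_right
          energy_form_scale_left energy_form_scale_right) (simp add: algebra_simps)
    also have "\<dots> = 0"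
      using t0(2) t1(2) u'_S w_pos \<delta>_w by (simp add: s_def w_def[abs_def])
    finally show "energy_form N u (\<lambda>k. \<phi> k + (t0 k + s * w k)) = 0" .
  qed
qed

lemma product_sigma_finite_lborel: "product_sigma_finite (\<lambda>_::'i. lborel :: real measure)"
  unfolding product_sigma_finite_def by (simp add: sigma_finite_lborel)

lemma distr_PiM_lborel_translate:
  fixes c :: "'i \<Rightarrow> real"
  assumes "finite I"
  shows "distr (PiM I (\<lambda>_. lborel)) (PiM I (\<lambda>_. lborel)) (\<lambda>x. restrict (\<lambda>i. c i + x i) I)
           = PiM I (\<lambda>_. lborel)"
    (is "distr ?M ?M ?\<tau> = ?M")
proof (rule product_sigma_finite.PiM_eqI[OF product_sigma_finite_lborel assms])
  fix A assume A: "\<And>i. i \<in> I \<Longrightarrow> A i \<in> sets (lborel :: real measure)"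
  have \<tau>: "?\<tau> \<in> measurable ?M ?M" by measurable
  have shift: "emeasure lborel ((+) (c i) -` A i) = emeasure lborel (A i)" if "i \<in> I" for i
    using A[OF that] emeasure_distr[of "(+) (c i)" lborel borel "A i"] by (simp add: lborel_distr_plus)
  have "?\<tau> -` PiE I A \<inter> space ?M = PiE I (\<lambda>i. (+) (c i) -` A i)"
    by (auto simp: space_PiM PiE_def Pi_def extensional_def)
  moreover have "PiE I A \<in> sets ?M" using A by (intro sets_PiM_I_finite[OF assms]) auto
  moreover have "(+) (c i) -` A i \<in> sets lborel" if "i \<in> I" for i
    using measurable_sets[of "(+) (c i)" borel borel "A i"] A[OF that] by simp
  ultimately show "emeasure (distr ?M ?M ?\<tau>) (PiE I A) = (\<Prod>i\<in>I. emeasure lborel (A i))"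
    using shift by (simp add: emeasure_distr[OF \<tau>]
        product_sigma_finite.emeasure_PiM[OF product_sigma_finite_lborel assms])
qed simp

lemma nn_integral_PiM_lborel_translate:
  fixes c :: "'i \<Rightarrow> real"
  assumes "finite I" and g: "g \<in> borel_measurable (PiM I (\<lambda>_. lborel))"
  shows "(\<integral>\<^sup>+x. g (restrict (\<lambda>i. c i + x i) I) \<partial>PiM I (\<lambda>_. lborel)) = (\<integral>\<^sup>+x. g x \<partial>PiM I (\<lambda>_. lborel))"
proof -
  have "(\<lambda>x. restrict (\<lambda>i. c i + x i) I) \<in> measurable (PiM I (\<lambda>_. lborel)) (PiM I (\<lambda>_. lborel :: real measure))"
    by measurable
  from nn_integral_distr[OF this] g show ?thesis
    by (simp add: distr_PiM_lborel_translate[OF assms(1)])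
qed

lemma borel_measurable_hamiltonian_pinned:
  "(\<lambda>x. hamiltonian N (\<lambda>k. pinned_field S x k + c k)) \<in> borel_measurable (PiM S (\<lambda>_. lborel))"
proof -
  have "(\<lambda>x. pinned_field S x k) \<in> borel_measurable (PiM S (\<lambda>_. lborel :: real measure))" for k
    by (cases "k \<in> S") (simp_all add: pinned_field_def)
  then show ?thesis unfolding hamiltonian_def by measurable
qed

lemma boltzmann_integral_shift:
  assumes "finite S" "S \<subseteq> {1..int N - 1}"
  obtains T where "\<And>k. k \<notin> S \<Longrightarrow> T k = \<phi> k"
    and "(\<integral>\<^sup>+x. ennreal (exp (- hamiltonian N (\<lambda>k. pinned_field S x k + \<phi> k))) \<partial>PiM S (\<lambda>_. lborel))
       = ennreal (exp (- hamiltonian N T))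
         * (\<integral>\<^sup>+x. ennreal (exp (- hamiltonian N (pinned_field S x))) \<partial>PiM S (\<lambda>_. lborel))"
proof -
  obtain t where t_supp: "\<forall>k. k \<notin> S \<longrightarrow> t k = 0"
    and t_orth: "\<forall>u. (\<forall>k. k \<notin> S \<longrightarrow> u k = 0) \<longrightarrow> energy_form N u (\<lambda>k. \<phi> k + t k) = 0"
    using energy_orthogonal_correction[OF assms] by blast
  define T where "T k = \<phi> k + t k" for k
  let ?M = "PiM S (\<lambda>_. lborel :: real measure)"
  let ?w = "\<lambda>\<psi>. ennreal (exp (- hamiltonian N \<psi>))"
  have split: "hamiltonian N (\<lambda>k. pinned_field S (restrict (\<lambda>i. t i + x i) S) k + \<phi> k)
      = hamiltonian N (pinned_field S x) + hamiltonian N T" for x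
  proof -
    have "(\<lambda>k. pinned_field S (restrict (\<lambda>i. t i + x i) S) k + \<phi> k) = (\<lambda>k. pinned_field S x k + T k)"
      using t_supp by (auto simp: pinned_field_def T_def fun_eq_iff)
    moreover have "energy_form N (pinned_field S x) T = 0"
      using t_orth by (simp add: T_def[abs_def] pinned_field_def)
    ultimately show ?thesis by (simp add: hamiltonian_add_orthogonal)
  qed
  have "(\<integral>\<^sup>+x. ?w (\<lambda>k. pinned_field S x k + \<phi> k) \<partial>?M)
      = (\<integral>\<^sup>+x. ?w (\<lambda>k. pinned_field S (restrict (\<lambda>i. t i + x i) S) k + \<phi> k) \<partial>?M)"
    by (rule nn_integral_PiM_lborel_translate[OF assms(1), symmetric])
      (intro measurable_compose[OF borel_measurable_hamiltonian_pinned]; simp)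
  also have "\<dots> = (\<integral>\<^sup>+x. ?w (pinned_field S x) * ?w T \<partial>?M)"
    unfolding split minus_add_distrib exp_add by (simp add: ennreal_mult)
  also have "\<dots> = ?w T * (\<integral>\<^sup>+x. ?w (pinned_field S x) \<partial>?M)"
  proof -
    have "(\<lambda>x. hamiltonian N (pinned_field S x)) \<in> borel_measurable ?M"
      using borel_measurable_hamiltonian_pinned[of N S "\<lambda>_. 0"] by simp
    then show ?thesis by (subst nn_integral_multc) (simp_all add: mult.commute)
  qed
  finally show thesis
    using t_supp by (intro that[of T]) (simp_all add: T_def)
qed

lemma conditional_boltzmann_integral_le:
  assumes "finite S" "S \<subseteq> {1..int N - 1}" "Y \<subseteq> {1..int N - 1}" "Y \<inter> S = {}"
    and "Y \<subseteq> {p + 1, q - 1}" "p \<notin> Y \<union> S" "q \<notin> Y \<union> S" "1 \<le> p" "p \<le> q" "q \<le> int N - 1"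
  shows "(\<integral>\<^sup>+x. ennreal (exp (- hamiltonian N (\<lambda>k. pinned_field S x k + pinned_field Y y k)))
            \<partial>PiM S (\<lambda>_. lborel))
         \<le> ennreal (exp (- (\<Sum>k\<in>Y. (y k)\<^sup>2) / (2 * real N)))
           * (\<integral>\<^sup>+x. ennreal (exp (- hamiltonian N (pinned_field S x))) \<partial>PiM S (\<lambda>_. lborel))"
proof -
  obtain T where T: "\<And>k. k \<notin> S \<Longrightarrow> T k = pinned_field Y y k"
    and shift: "(\<integral>\<^sup>+x. ennreal (exp (- hamiltonian N (\<lambda>k. pinned_field S x k + pinned_field Y y k)))
            \<partial>PiM S (\<lambda>_. lborel))
         = ennreal (exp (- hamiltonian N T))
           * (\<integral>\<^sup>+x. ennreal (exp (- hamiltonian N (pinned_field S x))) \<partial>PiM S (\<lambda>_. lborel))"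
    using boltzmann_integral_shift[OF assms(1,2)] by blast
  have "T k = y k" if "k \<in> Y" for k
    using that assms(4) T[of k] by (auto simp: pinned_field_def)
  then have "(\<Sum>k\<in>Y. (y k)\<^sup>2) = (\<Sum>k\<in>Y. (T k)\<^sup>2)" by simp
  also have "\<dots> / (2 * real N) \<le> hamiltonian N T"
  proof (rule sum_sq_le_hamiltonian)
    have "T k = 0" if "k \<notin> {1..int N - 1} \<or> k \<in> {p, q}" for k
    proof -
      have "k \<notin> S" "k \<notin> Y" using that assms(2,3,6,7) by blast+
      then show ?thesis using T[of k] by (simp add: pinned_field_def)
    qed
    then show "T (-1) = 0" "T 0 = 0" "T (int N) = 0" "T (int N + 1) = 0" "T p = 0" "T q = 0"
      by auto
  qed fact+
  finally show ?thesis
    unfolding shift by (intro mult_right_mono ennreal_leI) auto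
qed

lemma nn_integral_gaussian:
  assumes "c > 0"
  shows "(\<integral>\<^sup>+v. ennreal (exp (- v\<^sup>2 / (2 * c))) \<partial>lborel) = ennreal (sqrt (2 * pi * c))"
proof -
  have \<sigma>: "0 < sqrt c" using assms by simp
  have "(\<integral>\<^sup>+v. ennreal (exp (- v\<^sup>2 / (2 * c))) \<partial>lborel)
      = (\<integral>\<^sup>+v. ennreal (sqrt (2 * pi * c)) * ennreal (normal_density 0 (sqrt c) v) \<partial>lborel)"
    using assms by (intro nn_integral_cong) (simp add: normal_density_def ennreal_mult[symmetric] real_sqrt_mult)
  also have "\<dots> = ennreal (sqrt (2 * pi * c)) * (\<integral>\<^sup>+v. ennreal (normal_density 0 (sqrt c) v) \<partial>lborel)"
    by (rule nn_integral_cmult) simp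
  also have "(\<integral>\<^sup>+v. ennreal (normal_density 0 (sqrt c) v) \<partial>lborel) = 1"
    using \<sigma> by (subst nn_integral_eq_integral)
      (auto intro!: integrable_normal_density simp: integral_normal_density)
  finally show ?thesis by simp
qed

lemma nn_integral_PiM_gaussian:
  fixes Y :: "'i set"
  assumes "finite Y" "c > 0"
  shows "(\<integral>\<^sup>+y. ennreal (exp (- (\<Sum>k\<in>Y. (y k)\<^sup>2) / (2 * c))) \<partial>PiM Y (\<lambda>_. lborel))
           = ennreal (sqrt (2 * pi * c)) ^ card Y"
proof -
  define g where "g v = ennreal (exp (- v\<^sup>2 / (2 * c)))" for v :: real
  have "ennreal (exp (- (\<Sum>k\<in>Y. (y k)\<^sup>2) / (2 * c))) = (\<Prod>k\<in>Y. g (y k))" for y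
  proof -
    have "exp (- (\<Sum>k\<in>Y. (y k)\<^sup>2) / (2 * c)) = exp (\<Sum>k\<in>Y. - (y k)\<^sup>2 / (2 * c))"
      by (simp add: sum_divide_distrib sum_negf)
    then show ?thesis by (simp add: g_def exp_sum[OF assms(1)] prod_ennreal)
  qed
  moreover have "(\<integral>\<^sup>+y. (\<Prod>k\<in>Y. g (y k)) \<partial>PiM Y (\<lambda>_. lborel)) = (\<Prod>k\<in>Y. \<integral>\<^sup>+v. g v \<partial>lborel)"
    by (rule product_sigma_finite.product_nn_integral_prod[OF product_sigma_finite_lborel assms(1)])
      (simp add: g_def)
  ultimately show ?thesis
    using nn_integral_gaussian[OF assms(2)] by (simp add: g_def)
qed

lemma boltzmann_integral_integrate_out_le:
  assumes "finite S" "finite Y" "S \<subseteq> {1..int N - 1}" "Y \<subseteq> {1..int N - 1}" "Y \<inter> S = {}"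
    and "Y \<subseteq> {p + 1, q - 1}" "p \<notin> Y \<union> S" "q \<notin> Y \<union> S" "1 \<le> p" "p \<le> q" "q \<le> int N - 1"
  shows "(\<integral>\<^sup>+x. ennreal (exp (- hamiltonian N (pinned_field (Y \<union> S) x))) \<partial>PiM (Y \<union> S) (\<lambda>_. lborel))
         \<le> ennreal (sqrt (2 * pi * real N)) ^ card Y
           * (\<integral>\<^sup>+x. ennreal (exp (- hamiltonian N (pinned_field S x))) \<partial>PiM S (\<lambda>_. lborel))"
    (is "_ \<le> _ * ?Z")
proof -
  let ?M = "\<lambda>S. PiM S (\<lambda>_. lborel :: real measure)"
  have "(\<integral>\<^sup>+x. ennreal (exp (- hamiltonian N (pinned_field (Y \<union> S) x))) \<partial>?M (Y \<union> S))
      = (\<integral>\<^sup>+y. (\<integral>\<^sup>+x. ennreal (exp (- hamiltonian N (pinned_field (Y \<union> S) (merge Y S (y, x)))))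
            \<partial>?M S) \<partial>?M Y)"
    by (rule product_sigma_finite.product_nn_integral_fold[OF product_sigma_finite_lborel assms(5,2,1)])
      (use borel_measurable_hamiltonian_pinned[of N "Y \<union> S" "\<lambda>_. 0"] in simp)
  also have "\<dots> \<le> (\<integral>\<^sup>+y. ennreal (exp (- (\<Sum>k\<in>Y. (y k)\<^sup>2) / (2 * real N))) * ?Z \<partial>?M Y)"
  proof (rule nn_integral_mono)
    fix y
    have "pinned_field (Y \<union> S) (merge Y S (y, x)) = (\<lambda>k. pinned_field S x k + pinned_field Y y k)" for x
      using assms(5) by (auto simp: pinned_field_def merge_def fun_eq_iff)
    then show "(\<integral>\<^sup>+x. ennreal (exp (- hamiltonian N (pinned_field (Y \<union> S) (merge Y S (y, x))))) \<partial>?M S)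
        \<le> ennreal (exp (- (\<Sum>k\<in>Y. (y k)\<^sup>2) / (2 * real N))) * ?Z"
      using conditional_boltzmann_integral_le[OF assms(1,3,4,5,6-11)] by simp
  qed
  also have "\<dots> = ennreal (sqrt (2 * pi * real N)) ^ card Y * ?Z"
    using assms(9-11) nn_integral_PiM_gaussian[OF assms(2), of "real N"]
    by (subst nn_integral_multc) auto
  finally show ?thesis .
qed

lemma ennreal_sqrt_power_le:
  assumes "1 \<le> c" "n \<le> 2"
  shows "ennreal (sqrt c) ^ n \<le> ennreal c"
proof -
  have "sqrt c ^ n \<le> sqrt c ^ 2" using assms by (intro power_increasing) auto
  also have "\<dots> = c" using assms(1) by simp
  finally show ?thesis using assms(1) by (subst ennreal_power) (auto intro: ennreal_leI)
qed

theorem lemma3p11: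
  fixes N :: nat and P :: "int set"
  assumes "P \<noteq> {}" and "P \<subseteq> {1..int N - 1}"
  shows "partition_fn N P \<le> ennreal (2 * pi * real N) * partition_fn N (correction P)"
proof -
  define p q where "p = Min P" and "q = Max P"
  have "finite P" using assms(2) finite_subset by blast
  then have pq: "p \<in> P" "q \<in> P" "1 \<le> p" "p \<le> q" "q \<le> int N - 1"
    using assms by (auto simp: p_def q_def)
  define S where "S = free_sites N (correction P)"
  define Y where "Y = free_sites N P - S"
  have split: "free_sites N P = Y \<union> S" "Y \<inter> S = {}"
    by (auto simp: Y_def S_def free_sites_def correction_def)
  have Y: "Y \<subseteq> {p + 1, q - 1}" "Y \<subseteq> {1..int N - 1}" "finite Y"
    by (auto simp: Y_def S_def free_sites_def correction_def p_def q_def)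
  have S: "S \<subseteq> {1..int N - 1}" "finite S" by (auto simp: S_def free_sites_def)
  have pins: "p \<notin> Y \<union> S" "q \<notin> Y \<union> S" using pq split(1) by (auto simp: free_sites_def)
  have "partition_fn N P \<le> ennreal (sqrt (2 * pi * real N)) ^ card Y * partition_fn N (correction P)"
    unfolding partition_fn_def split(1) S_def[symmetric]
    by (rule boltzmann_integral_integrate_out_le[OF S(2) Y(3) S(1) Y(2) split(2) Y(1) pins pq(3-5)])
  also have "\<dots> \<le> ennreal (2 * pi * real N) * partition_fn N (correction P)"
  proof (intro mult_right_mono ennreal_sqrt_power_le)
    show "1 \<le> 2 * pi * real N" using pq pi_ge_two by (intro mult_ge1_I) auto
    show "card Y \<le> 2" using card_mono[OF _ Y(1)] by (simp add: card_insert_if split: if_splits)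
  qed simp
  finally show ?thesis .
qed

end
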